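(* In the setting described in the context, with probability $1-o(1)$ (as $m\to\infty$), there exists $c\in C$ such that $$\Big(-\frac2c+1\Big)\frac{m}{\sqrt q}\log m\ \le\ h(c)\ \le\ (2c-1)\frac{m}{\sqrt q}\log m.$$
   Context: Two agents $a,b$, $m$ items, unknown utilities $u^a_i,u^b_i\in[0,1]$, additive. For an allocation (partition $(\mathcal{A}_a,\mathcal{A}_b)$ of $[m]$), $\mathrm{Envy}_{a\to b}=\sum_{i\in\mathcal{A}_b}u^a_i-\sum_{i\in\mathcal{A}_a}u^a_i$, $\mathrm{Envy}_{b\to a}=\sum_{i\in\mathcal{A}_a}u^b_i-\sum_{i\in\mathcal{A}_b}u^b_i$, $\mathrm{Envy}=\max$ of the two; assume $\min_{\mathcal{A}}\mathrm{Envy}(\mathcal{A})\le-\Delta$, with $\Delta=\Delta(m)$, $\Delta\ge m^{1/4}\log^2m$, $\Delta=o(m/\log m)$. Noise variance is $\sigma^2=1$ and $q=m\lceil15\frac{m^{3/2}}{\Delta^2}\log m+\log^2m\rceil$. Each item $i$ is queried $q/m$ times, each query returning independent $y^a\sim N(u^a_i,1)$, $y^b\sim N(u^b_i,1)$, and $v^\nu_i$ is the average of agent $\nu$'s observations for item $i$ (so $v^\nu_i\sim N(u^\nu_i,m/q)$, all independent). For $c>0$, $x_i(c)=1$ if $cv^a_i>v^b_i$ and $x_i(c)=-1$ otherwise; $e'_a(c)=-\sum_ix_i(c)v^a_i$, $e'_b(c)=\sum_ix_i(c)v^b_i$; $h(c)=\frac1{1+c}\big(e'_a(c)-ce'_b(c)\big)$.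 $C=\{k/m^3:k=1,2,\dots,m^6\}$. $\log$ is natural. *)

theory Defs
  imports "HOL-Probability.Probability" "HOL-Library.Landau_Symbols"
begin

definition nq :: "nat \<Rightarrow> real \<Rightarrow> nat" where
  "nq m D = m * nat \<lceil>15 * real m powr (3/2) / D\<^sup>2 * ln (real m) + (ln (real m))\<^sup>2\<rceil>"

text \<open>Envy of an allocation: agent a gets A, agent b gets the rest of {..<m}.\<close>
definition envy :: "nat \<Rightarrow> (nat \<Rightarrow> real) \<Rightarrow> (nat \<Rightarrow> real) \<Rightarrow> nat set \<Rightarrow> real" where
  "envy m ua ub A = max
     ((\<Sum>i\<in>{..<m} - A. ua i) - (\<Sum>i\<in>A. ua i))
     ((\<Sum>i\<in>A. ub i) - (\<Sum>i\<in>{..<m} - A. ub i))"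

text \<open>Probability space of the averaged observations: \<omega> (True, i) = v^a_i, \<omega> (False, i) = v^b_i,
  all independent, v^nu_i ~ N(u^nu_i, var) with standard deviation sd = sqrt var.\<close>
definition obs_space :: "nat \<Rightarrow> (nat \<Rightarrow> real) \<Rightarrow> (nat \<Rightarrow> real) \<Rightarrow> real \<Rightarrow> (bool \<times> nat \<Rightarrow> real) measure" where
  "obs_space m ua ub sd = PiM (UNIV \<times> {..<m})
     (\<lambda>(\<nu>, i). density lborel (normal_density (if \<nu> then ua i else ub i) sd))"

definition xsgn :: "(nat \<Rightarrow> real) \<Rightarrow> (nat \<Rightarrow> real) \<Rightarrow> real \<Rightarrow> nat \<Rightarrow> real" where
  "xsgn va vb c i = (if c * va i > vb i then 1 else -1)"

definition ea' :: "nat \<Rightarrow> (nat \<Rightarrow> real) \<Rightarrow> (nat \<Rightarrow> real) \<Rightarrow> real \<Rightarrow> real" where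
  "ea' m va vb c = - (\<Sum>i<m. xsgn va vb c i * va i)"

definition eb' :: "nat \<Rightarrow> (nat \<Rightarrow> real) \<Rightarrow> (nat \<Rightarrow> real) \<Rightarrow> real \<Rightarrow> real" where
  "eb' m va vb c = (\<Sum>i<m. xsgn va vb c i * vb i)"

definition hfun :: "nat \<Rightarrow> (nat \<Rightarrow> real) \<Rightarrow> (nat \<Rightarrow> real) \<Rightarrow> real \<Rightarrow> real" where
  "hfun m va vb c = (ea' m va vb c - c * eb' m va vb c) / (1 + c)"

definition Cgrid :: "nat \<Rightarrow> real set" where
  "Cgrid m = {real k / real m ^ 3 | k. 1 \<le> k \<and> k \<le> m ^ 6}"

definition good_event :: "nat \<Rightarrow> real \<Rightarrow> (bool \<times> nat \<Rightarrow> real) set" where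
  "good_event m q = {\<omega>. \<exists>c\<in>Cgrid m.
      (- 2 / c + 1) * (real m / sqrt q) * ln (real m) \<le> hfun m (\<lambda>i. \<omega> (True, i)) (\<lambda>i. \<omega> (False, i)) c
    \<and> hfun m (\<lambda>i. \<omega> (True, i)) (\<lambda>i. \<omega> (False, i)) c \<le> (2 * c - 1) * (real m / sqrt q) * ln (real m)}"

end

theory Submission
  imports Defs "HOL-Real_Asymp.Real_Asymp"
begin

text \<open>
  With probability 1 - o(1) two things happen. Every observation lies within 1 of its mean: the
  variance m/q is at most 1/log^2 m, so a Chernoff bound and a union bound over the 2m observations
  leave an error 4m exp(-log^2 m / 2). And no grid point c has five indices i with
  |v^b_i - c v^a_i| <= 2/m^3: the density of v^b_i is at most sqrt(q/m), so the union bound over the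
  m^6 grid points and the (m choose 5) index sets leaves an error m^11 (16 sqrt m / m^3)^5.

  On this event the argument is deterministic. Write h(c) = - sum_i x_i(c) w_i(c) with
  w_i(c) = (v^a_i + c v^b_i) / (1 + c). Between neighbouring grid points c and c + 1/m^3 each
  w_i moves by O(1/m^3), and x_i can flip only if |v^b_i - c v^a_i| <= 2/m^3; hence h drops by at
  most 17 per step. With K = m log m / sqrt q >= 17, the lower bound (1 - 2/c) K holds at the first
  grid point, the upper bound (2c - 1) K holds at the last one, and the upper bound at c exceeds
  the lower bound at c + 1/m^3 by at least K. Walking along the grid, h cannot get from above the
  upper bound to below the lower bound in one step, so it lies between the two bounds at some grid
  point.
\<close>

section \<open>Gaussian tail and anti-concentration bounds\<close>

lemma normal_density_le_inverse:
  assumes "0 < \<sigma>"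
  shows "normal_density \<mu> \<sigma> y \<le> 1 / \<sigma>"
proof -
  have "\<sigma> \<le> sqrt (2 * pi) * \<sigma>"
    using assms pi_gt3 by (simp add: mult_le_cancel_right1)
  also have "\<dots> = sqrt (2 * pi * \<sigma>\<^sup>2)"
    using assms by (simp add: real_sqrt_mult)
  finally have "1 / sqrt (2 * pi * \<sigma>\<^sup>2) \<le> 1 / \<sigma>"
    using assms by (simp add: frac_le)
  moreover have "normal_density \<mu> \<sigma> y \<le> 1 / sqrt (2 * pi * \<sigma>\<^sup>2) * 1"
    unfolding normal_density_def by (intro mult_left_mono) simp_all
  ultimately show ?thesis
    by simp
qed

lemma emeasure_normal_interval_le:
  assumes "0 < \<sigma>" "0 \<le> r"
  shows "emeasure (density lborel (normal_density \<mu> \<sigma>)) {a - r..a + r} \<le> ennreal (2 * r / \<sigma>)"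
proof -
  have "emeasure (density lborel (normal_density \<mu> \<sigma>)) {a - r..a + r}
      = (\<integral>\<^sup>+ y. ennreal (normal_density \<mu> \<sigma> y) * indicator {a - r..a + r} y \<partial>lborel)"
    by (simp add: emeasure_density)
  also have "\<dots> \<le> (\<integral>\<^sup>+ y. ennreal (1 / \<sigma>) * indicator {a - r..a + r} y \<partial>lborel)"
    using normal_density_le_inverse[OF assms(1)]
    by (intro nn_integral_mono mult_right_mono ennreal_leI) auto
  also have "\<dots> = ennreal (2 * r / \<sigma>)"
    using assms by (simp add: nn_integral_cmult_indicator ennreal_mult'[symmetric])
  finally show ?thesis .
qed

lemma normal_density_mult_exp:
  assumes "0 < \<sigma>"
  shows "normal_density \<mu> \<sigma> y * exp (s * (y - \<mu>))
       = exp (s\<^sup>2 * \<sigma>\<^sup>2 / 2) * normal_density (\<mu> + s * \<sigma>\<^sup>2) \<sigma> y"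
proof -
  have "- (y - \<mu>)\<^sup>2 / (2 * \<sigma>\<^sup>2) + s * (y - \<mu>)
      = s\<^sup>2 * \<sigma>\<^sup>2 / 2 + - (y - (\<mu> + s * \<sigma>\<^sup>2))\<^sup>2 / (2 * \<sigma>\<^sup>2)"
    using assms by (simp add: field_simps power2_eq_square)
  then show ?thesis
    unfolding normal_density_def by (simp add: exp_add[symmetric] ac_simps)
qed

lemma nn_integral_normal_density_exp:
  assumes "0 < \<sigma>"
  shows "(\<integral>\<^sup>+ y. ennreal (normal_density \<mu> \<sigma> y * exp (s * (y - \<mu>))) \<partial>lborel)
       = ennreal (exp (s\<^sup>2 * \<sigma>\<^sup>2 / 2))"
  using assms
  by (simp add: normal_density_mult_exp ennreal_mult' nn_integral_cmult
      nn_integral_eq_integral)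

lemma one_le_exp_tail:
  fixes s t z :: real
  assumes "0 \<le> s" "t < \<bar>z\<bar>"
  shows "1 \<le> exp (- s * t) * (exp (s * z) + exp (- s * z))"
proof -
  have "1 \<le> exp (- s * t + s * z) + exp (- s * t + - s * z)"
    using assms mult_left_mono[of t "\<bar>z\<bar>" s]
    by (cases "0 \<le> z") (auto intro: add_increasing add_increasing2 simp: algebra_simps)
  then show ?thesis
    unfolding exp_add by (simp add: distrib_left)
qed

lemma emeasure_normal_tail_le:
  assumes "0 < \<sigma>" "0 \<le> t"
  shows "emeasure (density lborel (normal_density \<mu> \<sigma>)) {y. t < \<bar>y - \<mu>\<bar>}
       \<le> ennreal (2 * exp (- t\<^sup>2 / (2 * \<sigma>\<^sup>2)))"
proof -
  define s where "s = t / \<sigma>\<^sup>2"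
  have "0 \<le> s"
    using assms by (simp add: s_def)
  let ?f = "\<lambda>s y. ennreal (normal_density \<mu> \<sigma> y * exp (s * (y - \<mu>)))"
  have tail: "ennreal (normal_density \<mu> \<sigma> y) * indicator {y. t < \<bar>y - \<mu>\<bar>} y
      \<le> ennreal (exp (- s * t)) * (?f s y + ?f (- s) y)" for y
  proof (cases "t < \<bar>y - \<mu>\<bar>")
    case True
    then have "normal_density \<mu> \<sigma> y
        \<le> normal_density \<mu> \<sigma> y * (exp (- s * t) * (exp (s * (y - \<mu>)) + exp (- s * (y - \<mu>))))"
      using mult_left_mono[OF one_le_exp_tail[OF \<open>0 \<le> s\<close>] normal_density_nonneg] by simp
    also have "\<dots> = exp (- s * t) * (normal_density \<mu> \<sigma> y * exp (s * (y - \<mu>))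
                         + normal_density \<mu> \<sigma> y * exp (- s * (y - \<mu>)))"
      by (simp add: algebra_simps)
    finally show ?thesis
      using True by (simp add: ennreal_mult'[symmetric] ennreal_plus[symmetric] del: ennreal_plus)
  qed simp
  have "emeasure (density lborel (normal_density \<mu> \<sigma>)) {y. t < \<bar>y - \<mu>\<bar>}
      = (\<integral>\<^sup>+ y. ennreal (normal_density \<mu> \<sigma> y) * indicator {y. t < \<bar>y - \<mu>\<bar>} y \<partial>lborel)"
    by (simp add: emeasure_density)
  also have "\<dots> \<le> (\<integral>\<^sup>+ y. ennreal (exp (- s * t)) * (?f s y + ?f (- s) y) \<partial>lborel)"
    by (intro nn_integral_mono tail)
  also have "\<dots> = ennreal (exp (- s * t))
      * (ennreal (exp (s\<^sup>2 * \<sigma>\<^sup>2 / 2)) + ennreal (exp (s\<^sup>2 * \<sigma>\<^sup>2 / 2)))"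
    using assms nn_integral_normal_density_exp[OF assms(1), of \<mu> "- s"]
    by (simp add: nn_integral_cmult nn_integral_add nn_integral_normal_density_exp)
  also have "\<dots> = ennreal (2 * exp (- t\<^sup>2 / (2 * \<sigma>\<^sup>2)))"
  proof -
    have "- s * t + s\<^sup>2 * \<sigma>\<^sup>2 / 2 = - t\<^sup>2 / (2 * \<sigma>\<^sup>2)"
      using assms by (simp add: s_def field_simps power2_eq_square)
    then show ?thesis
      by (simp add: ennreal_mult'[symmetric] ennreal_plus[symmetric] exp_add[symmetric] algebra_simps
          del: ennreal_plus)
  qed
  finally show ?thesis .
qed

section \<open>Independent Gaussian observations\<close>

definition normal_product :: "'i set \<Rightarrow> ('i \<Rightarrow> real) \<Rightarrow> real \<Rightarrow> ('i \<Rightarrow> real) measure" where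
  "normal_product I \<mu> \<sigma> = PiM I (\<lambda>p. density lborel (normal_density (\<mu> p) \<sigma>))"

lemma obs_space_eq_normal_product:
  "obs_space m ua ub \<sigma> = normal_product (UNIV \<times> {..<m}) (\<lambda>(\<nu>, i). if \<nu> then ua i else ub i) \<sigma>"
  unfolding obs_space_def normal_product_def by (intro PiM_cong) (auto split: prod.split)

lemma prob_space_normal_product: "0 < \<sigma> \<Longrightarrow> prob_space (normal_product I \<mu> \<sigma>)"
  unfolding normal_product_def by (simp add: prob_space_PiM prob_space_normal_density)

lemma measurable_normal_product_component [measurable]:
  "(\<lambda>\<omega>. \<omega> p) \<in> borel_measurable (normal_product I \<mu> \<sigma>)"
proof (cases "p \<in> I")
  case True
  then show ?thesis
    unfolding normal_product_def
    by (subst measurable_cong_sets[OF refl, of _ borel, symmetric])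
       (auto intro: measurable_component_singleton)
next
  case False
  then have "\<omega> p = undefined" if "\<omega> \<in> space (normal_product I \<mu> \<sigma>)" for \<omega>
    using that by (auto simp: normal_product_def space_PiM PiE_def extensional_def)
  then show ?thesis
    by (subst measurable_cong[where g = "\<lambda>_. undefined"]) auto
qed

lemma normal_product_deviation_le:
  fixes \<mu> :: "'i \<Rightarrow> real"
  assumes "0 < \<sigma>" "0 \<le> t" "finite I"
  defines "Mx \<equiv> normal_product I \<mu> \<sigma>"
  shows "{\<omega> \<in> space Mx. \<exists>p\<in>I. t < \<bar>\<omega> p - \<mu> p\<bar>} \<in> sets Mx"
    and "measure Mx {\<omega> \<in> space Mx. \<exists>p\<in>I. t < \<bar>\<omega> p - \<mu> p\<bar>}
         \<le> 2 * card I * exp (- t\<^sup>2 / (2 * \<sigma>\<^sup>2))"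
proof -
  let ?N = "\<lambda>p. density lborel (normal_density (\<mu> p) \<sigma>)"
  interpret product_prob_space ?N I
    using assms(1) by (simp add: product_prob_space_def product_prob_space_axioms_def
        product_sigma_finite_def prob_space_imp_sigma_finite prob_space_normal_density)
  interpret prob_space Mx
    unfolding Mx_def using assms(1) by (rule prob_space_normal_product)
  define A where "A p = {\<omega> \<in> space Mx. \<omega> p \<in> {y. t < \<bar>y - \<mu> p\<bar>}}" for p
  have A: "A p \<in> sets Mx" if "p \<in> I" for p
    unfolding A_def Mx_def by measurable
  have eq: "{\<omega> \<in> space Mx. \<exists>p\<in>I. t < \<bar>\<omega> p - \<mu> p\<bar>} = (\<Union>p\<in>I. A p)"
    unfolding A_def by auto
  have sets: "(\<Union>p\<in>I. A p) \<in> sets Mx"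
    using A assms(3) by blast
  have "emeasure Mx (A p) \<le> ennreal (2 * exp (- t\<^sup>2 / (2 * \<sigma>\<^sup>2)))" if "p \<in> I" for p
    using emeasure_PiM_Collect_single[OF that, of "{y. t < \<bar>y - \<mu> p\<bar>}"]
      emeasure_normal_tail_le[OF assms(1,2)]
    unfolding A_def Mx_def normal_product_def by simp
  then have "emeasure Mx (\<Union>p\<in>I. A p) \<le> (\<Sum>p\<in>I. ennreal (2 * exp (- t\<^sup>2 / (2 * \<sigma>\<^sup>2))))"
    using A assms(3) by (intro order_trans[OF emeasure_subadditive_finite sum_mono]) auto
  also have "\<dots> = ennreal (card I * (2 * exp (- t\<^sup>2 / (2 * \<sigma>\<^sup>2))))"
    by (simp add: ennreal_mult' ennreal_of_nat_eq_real_of_nat)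
  finally have "emeasure Mx (\<Union>p\<in>I. A p) \<le> ennreal (card I * (2 * exp (- t\<^sup>2 / (2 * \<sigma>\<^sup>2))))" .
  then show "{\<omega> \<in> space Mx. \<exists>p\<in>I. t < \<bar>\<omega> p - \<mu> p\<bar>} \<in> sets Mx"
    and "measure Mx {\<omega> \<in> space Mx. \<exists>p\<in>I. t < \<bar>\<omega> p - \<mu> p\<bar>}
         \<le> 2 * card I * exp (- t\<^sup>2 / (2 * \<sigma>\<^sup>2))"
    using sets unfolding eq by (simp_all add: emeasure_eq_measure ennreal_le_iff mult_ac)
qed

definition near_line :: "real \<Rightarrow> real \<Rightarrow> nat \<Rightarrow> (bool \<times> nat \<Rightarrow> real) set" where
  "near_line c r i = {\<omega>. \<bar>\<omega> (False, i) - c * \<omega> (True, i)\<bar> \<le> r}"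

lemma prod_indicator:
  "finite S \<Longrightarrow> (\<Prod>i\<in>S. indicator (E i) x :: 'a :: comm_semiring_1) = indicator (\<Inter>i\<in>S. E i) x"
  by (induction S rule: finite_induct) (auto simp: indicator_def)

lemma sets_near_line [measurable]:
  "{\<omega> \<in> space (normal_product I \<mu> \<sigma>). \<omega> \<in> near_line c r i} \<in> sets (normal_product I \<mu> \<sigma>)"
  unfolding near_line_def by measurable

lemma nn_integral_near_line_coordinate_le:
  assumes "0 < \<sigma>" "0 \<le> r" "finite S" "i0 \<notin> S"
  shows "(\<integral>\<^sup>+ y. (\<Prod>i\<in>insert i0 S. indicator (near_line c r i) (x((False, i0) := y)))
           \<partial>density lborel (normal_density \<nu> \<sigma>))
       \<le> ennreal (2 * r / \<sigma>) * (\<Prod>i\<in>S. indicator (near_line c r i) x)"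
proof -
  let ?N = "density lborel (normal_density \<nu> \<sigma>)"
  let ?f = "\<Prod>i\<in>S. indicator (near_line c r i) x :: ennreal"
  have "(\<Prod>i\<in>insert i0 S. indicator (near_line c r i) (x((False, i0) := y)) :: ennreal)
      = indicator {c * x (True, i0) - r..c * x (True, i0) + r} y * ?f" for y
    using assms(3,4) by (auto intro!: prod.cong simp: near_line_def indicator_def abs_le_iff)
  then have "(\<integral>\<^sup>+ y. (\<Prod>i\<in>insert i0 S. indicator (near_line c r i) (x((False, i0) := y))) \<partial>?N)
      = emeasure ?N {c * x (True, i0) - r..c * x (True, i0) + r} * ?f"
    by (simp add: nn_integral_multc)
  also have "\<dots> \<le> ennreal (2 * r / \<sigma>) * ?f"
    by (intro mult_right_mono emeasure_normal_interval_le assms(1,2)) simp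
  finally show ?thesis .
qed

lemma nn_integral_prod_near_line_le:
  fixes \<mu> :: "bool \<times> nat \<Rightarrow> real"
  assumes "0 < \<sigma>" "0 \<le> r" "finite S" "finite I" "\<And>i. i \<in> S \<Longrightarrow> (True, i) \<in> I \<and> (False, i) \<in> I"
  shows "(\<integral>\<^sup>+\<omega>. (\<Prod>i\<in>S. indicator (near_line c r i) \<omega>) \<partial>normal_product I \<mu> \<sigma>)
       \<le> ennreal (2 * r / \<sigma>) ^ card S"
  using assms(3-5)
proof (induction S arbitrary: I rule: finite_induct)
  case empty
  interpret prob_space "normal_product I \<mu> \<sigma>"
    using assms(1) by (rule prob_space_normal_product)
  show ?case
    by (simp add: emeasure_space_1)
next
  case (insert i0 S)
  let ?N = "\<lambda>p. density lborel (normal_density (\<mu> p) \<sigma>)"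
  let ?f = "\<lambda>\<omega>. \<Prod>i\<in>S. indicator (near_line c r i) \<omega> :: ennreal"
  define j where "j = (False, i0)"
  define I' where "I' = I - {j}"
  have I: "I = insert j I'" "j \<notin> I'" "finite I'"
    using insert.prems unfolding I'_def j_def by auto
  have S: "(True, i) \<in> I' \<and> (False, i) \<in> I'" if "i \<in> S" for i
    using insert.prems(2)[of i] insert.hyps(2) that unfolding I'_def j_def by auto
  interpret product_sigma_finite ?N
    using assms(1)
    by (simp add: product_sigma_finite_def prob_space_imp_sigma_finite prob_space_normal_density)
  have indicator_measurable:
    "(\<lambda>\<omega>. indicator (near_line c r i) \<omega> :: ennreal) \<in> borel_measurable (normal_product J \<mu> \<sigma>)" for i J
    by measurable
  have "(\<integral>\<^sup>+\<omega>. (\<Prod>i\<in>insert i0 S. indicator (near_line c r i) \<omega>) \<partial>normal_product I \<mu> \<sigma>)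
      = (\<integral>\<^sup>+ x. (\<integral>\<^sup>+ y. (\<Prod>i\<in>insert i0 S. indicator (near_line c r i) (x(j := y))) \<partial>?N j)
           \<partial>PiM I' ?N)"
    unfolding normal_product_def I(1) using insert.prems I
    by (intro product_nn_integral_insert borel_measurable_prod_ennreal
        indicator_measurable[unfolded normal_product_def]) auto
  also have "\<dots> \<le> (\<integral>\<^sup>+ x. ennreal (2 * r / \<sigma>) * ?f x \<partial>PiM I' ?N)"
    unfolding j_def using assms(1,2) insert.hyps
    by (intro nn_integral_mono nn_integral_near_line_coordinate_le)
  also have "\<dots> = ennreal (2 * r / \<sigma>) * (\<integral>\<^sup>+ x. ?f x \<partial>normal_product I' \<mu> \<sigma>)"
    unfolding normal_product_def
    by (intro nn_integral_cmult borel_measurable_prod_ennreal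
        indicator_measurable[unfolded normal_product_def])
  also have "\<dots> \<le> ennreal (2 * r / \<sigma>) * ennreal (2 * r / \<sigma>) ^ card S"
    using S I(3) by (intro mult_left_mono insert.IH) auto
  also have "\<dots> = ennreal (2 * r / \<sigma>) ^ card (insert i0 S)"
    using insert.hyps by simp
  finally show ?case .
qed

lemma le_card_Collect_iff:
  assumes "finite J"
  shows "k \<le> card {i \<in> J. P i} \<longleftrightarrow> (\<exists>S\<subseteq>J. card S = k \<and> (\<forall>i\<in>S. P i))"
proof
  assume "k \<le> card {i \<in> J. P i}"
  then obtain S where "S \<subseteq> {i \<in> J. P i}" "card S = k" "finite S"
    by (rule obtain_subset_with_card_n)
  then show "\<exists>S\<subseteq>J. card S = k \<and> (\<forall>i\<in>S. P i)"
    by blast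
next
  assume "\<exists>S\<subseteq>J. card S = k \<and> (\<forall>i\<in>S. P i)"
  then obtain S where "S \<subseteq> {i \<in> J. P i}" "card S = k"
    by blast
  moreover have "finite {i \<in> J. P i}"
    using assms by (rule rev_finite_subset) blast
  ultimately show "k \<le> card {i \<in> J. P i}"
    using card_mono by blast
qed

lemma emeasure_near_line_all_le:
  fixes \<mu> :: "bool \<times> nat \<Rightarrow> real"
  assumes "0 < \<sigma>" "0 \<le> r" "finite J" "S \<subseteq> J"
  defines "Mx \<equiv> normal_product (UNIV \<times> J) \<mu> \<sigma>"
  shows "{\<omega> \<in> space Mx. \<forall>i\<in>S. \<omega> \<in> near_line c r i} \<in> sets Mx"
    and "emeasure Mx {\<omega> \<in> space Mx. \<forall>i\<in>S. \<omega> \<in> near_line c r i} \<le> ennreal (2 * r / \<sigma>) ^ card S"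
proof -
  have "finite S"
    using assms(3,4) by (rule finite_subset[rotated])
  then show A: "{\<omega> \<in> space Mx. \<forall>i\<in>S. \<omega> \<in> near_line c r i} \<in> sets Mx"
    unfolding Mx_def by (intro sets.sets_Collect_finite_All) auto
  have "emeasure Mx {\<omega> \<in> space Mx. \<forall>i\<in>S. \<omega> \<in> near_line c r i}
      = (\<integral>\<^sup>+\<omega>. indicator {\<omega> \<in> space Mx. \<forall>i\<in>S. \<omega> \<in> near_line c r i} \<omega> \<partial>Mx)"
    using A by simp
  also have "\<dots> = (\<integral>\<^sup>+\<omega>. (\<Prod>i\<in>S. indicator (near_line c r i) \<omega>) \<partial>Mx)"
    using \<open>finite S\<close> by (intro nn_integral_cong) (simp add: prod_indicator indicator_def)
  also have "\<dots> \<le> ennreal (2 * r / \<sigma>) ^ card S"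
    unfolding Mx_def using \<open>finite S\<close> assms(1-4) by (intro nn_integral_prod_near_line_le) auto
  finally show "emeasure Mx {\<omega> \<in> space Mx. \<forall>i\<in>S. \<omega> \<in> near_line c r i}
      \<le> ennreal (2 * r / \<sigma>) ^ card S" .
qed

lemma normal_product_near_line_count_le:
  fixes \<mu> :: "bool \<times> nat \<Rightarrow> real"
  assumes "0 < \<sigma>" "0 \<le> r" "finite J" "finite CS"
  defines "Mx \<equiv> normal_product (UNIV \<times> J) \<mu> \<sigma>"
  shows "{\<omega> \<in> space Mx. \<exists>c\<in>CS. k \<le> card {i\<in>J. \<omega> \<in> near_line c r i}} \<in> sets Mx"
    and "measure Mx {\<omega> \<in> space Mx. \<exists>c\<in>CS. k \<le> card {i\<in>J. \<omega> \<in> near_line c r i}}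
         \<le> card CS * (card J choose k) * (2 * r / \<sigma>) ^ k"
proof -
  interpret prob_space Mx
    unfolding Mx_def using assms(1) by (rule prob_space_normal_product)
  define SS where "SS = {S. S \<subseteq> J \<and> card S = k}"
  define A where "A = (\<lambda>(c, S). {\<omega> \<in> space Mx. \<forall>i\<in>S. \<omega> \<in> near_line c r i})"
  have "finite SS"
    unfolding SS_def using assms(3) by (auto intro: finite_subset[of _ "Pow J"])
  have A: "A cS \<in> sets Mx" "emeasure Mx (A cS) \<le> ennreal (2 * r / \<sigma>) ^ k" if "cS \<in> CS \<times> SS" for cS
    using that emeasure_near_line_all_le[OF assms(1-3), of _ \<mu>]
    unfolding A_def SS_def Mx_def by auto
  have "k \<le> card {i\<in>J. \<omega> \<in> near_line c r i} \<longleftrightarrow> (\<exists>S\<in>SS. \<forall>i\<in>S. \<omega> \<in> near_line c r i)" for \<omega> c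
    unfolding SS_def le_card_Collect_iff[OF assms(3)] by blast
  then have eq: "{\<omega> \<in> space Mx. \<exists>c\<in>CS. k \<le> card {i\<in>J. \<omega> \<in> near_line c r i}} = (\<Union>cS\<in>CS \<times> SS. A cS)"
    unfolding A_def by auto
  have sets: "(\<Union>cS\<in>CS \<times> SS. A cS) \<in> sets Mx"
    using A(1) assms(4) \<open>finite SS\<close> by blast
  have "emeasure Mx (\<Union>cS\<in>CS \<times> SS. A cS) \<le> (\<Sum>cS\<in>CS \<times> SS. ennreal (2 * r / \<sigma>) ^ k)"
    using A assms(4) \<open>finite SS\<close>
    by (intro order_trans[OF emeasure_subadditive_finite sum_mono]) auto
  also have "\<dots> = ennreal (card CS * (card J choose k) * (2 * r / \<sigma>) ^ k)"
    using assms(1,2,3) n_subsets[OF assms(3), of k]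
    by (simp add: SS_def card_cartesian_product ennreal_mult' ennreal_of_nat_eq_real_of_nat
        ennreal_power)
  finally show "measure Mx {\<omega> \<in> space Mx. \<exists>c\<in>CS. k \<le> card {i\<in>J. \<omega> \<in> near_line c r i}}
         \<le> card CS * (card J choose k) * (2 * r / \<sigma>) ^ k"
    using sets assms(1,2) unfolding eq by (simp add: emeasure_eq_measure ennreal_le_iff)
  show "{\<omega> \<in> space Mx. \<exists>c\<in>CS. k \<le> card {i\<in>J. \<omega> \<in> near_line c r i}} \<in> sets Mx"
    using sets unfolding eq .
qed

section \<open>Variation of h along the grid\<close>

lemma hfun_eq_neg_sum:
  "hfun m va vb c = - (\<Sum>i<m. xsgn va vb c i * ((va i + c * vb i) / (1 + c)))"
proof -
  have "ea' m va vb c - c * eb' m va vb c = - (\<Sum>i<m. xsgn va vb c i * (va i + c * vb i))"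
    unfolding ea'_def eb'_def by (simp add: sum_distrib_left sum.distrib algebra_simps)
  then show ?thesis
    unfolding hfun_def by (simp add: sum_divide_distrib)
qed

lemma abs_xsgn [simp]: "\<bar>xsgn va vb c i\<bar> = 1"
  by (simp add: xsgn_def)

lemma abs_convex_comb_le:
  fixes a b c B :: real
  assumes "0 \<le> c" "\<bar>a\<bar> \<le> B" "\<bar>b\<bar> \<le> B"
  shows "\<bar>(a + c * b) / (1 + c)\<bar> \<le> B"
proof -
  have "\<bar>a + c * b\<bar> \<le> B + c * B"
    using abs_triangle_ineq[of a "c * b"] mult_left_mono[OF assms(3,1)] assms(1,2)
    by (simp add: abs_mult)
  then show ?thesis
    using assms(1) by (simp add: abs_divide divide_le_eq algebra_simps)
qed

lemma abs_hfun_le: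
  assumes "0 \<le> c" "\<forall>i<m. \<bar>va i\<bar> \<le> B \<and> \<bar>vb i\<bar> \<le> B"
  shows "\<bar>hfun m va vb c\<bar> \<le> m * B"
proof -
  have "\<bar>hfun m va vb c\<bar> \<le> (\<Sum>i<m. \<bar>xsgn va vb c i * ((va i + c * vb i) / (1 + c))\<bar>)"
    unfolding hfun_eq_neg_sum abs_minus_cancel by (rule sum_abs)
  also have "\<dots> \<le> (\<Sum>i<m. B)"
    using assms abs_convex_comb_le[of c "va _" B "vb _"] by (intro sum_mono) (simp add: abs_mult)
  finally show ?thesis
    by simp
qed

lemma convex_comb_shift_le:
  fixes a b c d :: real
  assumes "0 \<le> c" "0 \<le> d"
  shows "\<bar>(a + (c + d) * b) / (1 + (c + d)) - (a + c * b) / (1 + c)\<bar> \<le> d * \<bar>b - a\<bar>"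
proof -
  define P where "P = (1 + c) * (1 + (c + d))"
  have "1 \<le> P"
    unfolding P_def using assms mult_mono[of 1 "1 + c" 1 "1 + (c + d)"] by simp
  have "(a + (c + d) * b) / (1 + (c + d)) - (a + c * b) / (1 + c) = d * (b - a) / P"
    unfolding P_def using assms by (simp add: field_simps)
  also have "\<bar>\<dots>\<bar> = d * \<bar>b - a\<bar> / P"
    using \<open>1 \<le> P\<close> assms(2) by (simp add: abs_mult abs_divide)
  also have "\<dots> \<le> d * \<bar>b - a\<bar>"
    using \<open>1 \<le> P\<close> assms(2) mult_left_mono[OF \<open>1 \<le> P\<close>, of "d * \<bar>b - a\<bar>"]
    by (simp add: divide_le_eq)
  finally show ?thesis .
qed

lemma sign_change_imp_near:
  fixes a b c d :: real
  assumes "0 \<le> d" "(c * a > b) \<noteq> ((c + d) * a > b)"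
  shows "\<bar>b - c * a\<bar> \<le> d * \<bar>a\<bar>"
proof -
  have "d * a \<le> d * \<bar>a\<bar>" "d * - a \<le> d * \<bar>a\<bar>"
    using mult_left_mono[OF abs_ge_self assms(1)] mult_left_mono[OF abs_ge_minus_self assms(1)]
    by simp_all
  then show ?thesis
    using assms(2) by (auto simp: distrib_right abs_le_iff)
qed

lemma xsgn_term_jump_le:
  assumes "0 \<le> c" "0 \<le> d" "\<bar>va i\<bar> \<le> B" "\<bar>vb i\<bar> \<le> B"
  shows "xsgn va vb (c + d) i * ((va i + (c + d) * vb i) / (1 + (c + d)))
       - xsgn va vb c i * ((va i + c * vb i) / (1 + c))
     \<le> 2 * B * d + (if \<bar>vb i - c * va i\<bar> \<le> B * d then 2 * B else 0)"
proof -
  have "0 \<le> B"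
    using assms(3) by linarith
  define x where "x = xsgn va vb c i"
  define x' where "x' = xsgn va vb (c + d) i"
  define w where "w = (va i + c * vb i) / (1 + c)"
  define w' where "w' = (va i + (c + d) * vb i) / (1 + (c + d))"
  have "\<bar>w' - w\<bar> \<le> d * \<bar>vb i - va i\<bar>"
    unfolding w_def w'_def using assms(1,2) by (rule convex_comb_shift_le)
  also have "\<dots> \<le> 2 * B * d"
    using mult_left_mono[of "\<bar>vb i - va i\<bar>" "2 * B" d] assms(2-4) by (simp add: mult_ac)
  finally have "x' * (w' - w) \<le> 2 * B * d"
    unfolding x'_def by (simp add: abs_le_iff xsgn_def)
  moreover have "(x' - x) * w \<le> (if \<bar>vb i - c * va i\<bar> \<le> B * d then 2 * B else 0)"
  proof (cases "x' = x")
    case False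
    then have "\<bar>vb i - c * va i\<bar> \<le> d * \<bar>va i\<bar>"
      unfolding x_def x'_def xsgn_def using assms(2)
      by (intro sign_change_imp_near) (auto split: if_splits)
    also have "\<dots> \<le> B * d"
      using mult_left_mono[OF assms(3,2)] by (simp add: mult.commute)
    finally have near: "\<bar>vb i - c * va i\<bar> \<le> B * d" .
    have "\<bar>x' - x\<bar> \<le> 2" "\<bar>w\<bar> \<le> B"
      unfolding x_def x'_def xsgn_def w_def using assms abs_convex_comb_le by auto
    then have "\<bar>(x' - x) * w\<bar> \<le> 2 * B"
      using mult_mono[of "\<bar>x' - x\<bar>" 2 "\<bar>w\<bar>" B] by (simp add: abs_mult)
    then show ?thesis
      using abs_le_D1 near by simp
  qed (simp add: \<open>0 \<le> B\<close>)
  \<comment> \<open>x' w' - x w = x' (w' - w) + (x' - x) w\<close>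
  ultimately show ?thesis
    unfolding x_def[symmetric] x'_def[symmetric] w_def[symmetric] w'_def[symmetric]
    by (simp add: algebra_simps)
qed

lemma hfun_drop_le:
  assumes "0 \<le> c" "0 \<le> d" "\<forall>i<m. \<bar>va i\<bar> \<le> B \<and> \<bar>vb i\<bar> \<le> B"
  shows "hfun m va vb c - hfun m va vb (c + d)
       \<le> 2 * B * d * m + 2 * B * card {i \<in> {..<m}. \<bar>vb i - c * va i\<bar> \<le> B * d}"
proof -
  have "hfun m va vb c - hfun m va vb (c + d)
      = (\<Sum>i<m. xsgn va vb (c + d) i * ((va i + (c + d) * vb i) / (1 + (c + d)))
               - xsgn va vb c i * ((va i + c * vb i) / (1 + c)))"
    unfolding hfun_eq_neg_sum by (simp add: sum_subtractf)
  also have "\<dots> \<le> (\<Sum>i<m. 2 * B * d + (if \<bar>vb i - c * va i\<bar> \<le> B * d then 2 * B else 0))"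
    using assms by (intro sum_mono xsgn_term_jump_le) auto
  also have "\<dots> = 2 * B * d * m + 2 * B * card {i \<in> {..<m}. \<bar>vb i - c * va i\<bar> \<le> B * d}"
    by (simp add: sum.distrib sum.If_cases Int_def mult_ac)
  finally show ?thesis .
qed

lemma exists_between_bounds_of_drops_le:
  fixes h lo up :: "nat \<Rightarrow> real"
  assumes "a \<le> N" "lo a \<le> h a" "h N \<le> up N"
    and "\<And>j. a \<le> j \<Longrightarrow> j < N \<Longrightarrow> h j - h (Suc j) \<le> up j - lo (Suc j)"
  shows "\<exists>j\<in>{a..N}. lo j \<le> h j \<and> h j \<le> up j"
  using assms
proof (induction N rule: dec_induct)
  case base
  then show ?case by auto
next
  case (step n)
  show ?case
  proof (cases "lo (Suc n) \<le> h (Suc n)")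
    case True
    then show ?thesis
      using step.hyps step.prems(2) by auto
  next
    case False
    then have "h n \<le> up n"
      using step.prems(2) step.prems(3)[of n] step.hyps by simp
    then show ?thesis
      using step.IH step.prems by fastforce
  qed
qed

lemma band_gap_ge:
  fixes c \<delta> K :: real
  assumes "0 < c" "0 < \<delta>" "\<delta> \<le> 1/2" "0 \<le> K"
  shows "K \<le> (2 * c - 1) * K - (- 2 / (c + \<delta>) + 1) * K"
proof -
  have "2 * (c + \<delta>) \<le> (c + \<delta>) * (c + \<delta>) + 1"
    using zero_le_power2[of "c + \<delta> - 1"] by (simp add: power2_eq_square algebra_simps)
  then have "2 \<le> (c + \<delta>) + 1 / (c + \<delta>)"
    using assms(1,2) by (simp add: field_simps)
  then have "1 \<le> (2 * c - 1) - (- 2 / (c + \<delta>) + 1)"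
    using assms(3) by (simp add: field_simps)
  from mult_right_mono[OF this assms(4)] show ?thesis
    by (simp add: algebra_simps)
qed

lemma Cgrid_eq_image: "Cgrid m = (\<lambda>k. real k / real m ^ 3) ` {1..m ^ 6}"
  unfolding Cgrid_def by auto

lemma finite_Cgrid: "finite (Cgrid m)"
  by (simp add: Cgrid_eq_image)

lemma card_Cgrid_le: "card (Cgrid m) \<le> m ^ 6"
  using card_image_le[of "{1..m ^ 6}" "\<lambda>k. real k / real m ^ 3"] by (simp add: Cgrid_eq_image)

lemma four_mult_le_cube: "2 \<le> x \<Longrightarrow> 4 * x \<le> (x :: real) ^ 3"
  using mult_right_mono[of 4 "x\<^sup>2" x] power_mono[of 2 x 2]
  by (simp add: power3_eq_cube power2_eq_square)

lemma hfun_grid_step_le: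
  assumes "2 \<le> m" "0 \<le> c" "\<forall>i<m. \<bar>va i\<bar> \<le> 2 \<and> \<bar>vb i\<bar> \<le> 2"
    and "card {i \<in> {..<m}. \<bar>vb i - c * va i\<bar> \<le> 2 / real m ^ 3} < 5"
  shows "hfun m va vb c - hfun m va vb (c + 1 / real m ^ 3) \<le> 17"
proof -
  have "4 * real m \<le> real m ^ 3"
    using assms(1) by (intro four_mult_le_cube) simp
  then have "2 * 2 * (1 / real m ^ 3) * m \<le> 1"
    using assms(1) by (simp add: field_simps)
  moreover have "hfun m va vb c - hfun m va vb (c + 1 / real m ^ 3)
      \<le> 2 * 2 * (1 / real m ^ 3) * m
       + 2 * 2 * real (card {i \<in> {..<m}. \<bar>vb i - c * va i\<bar> \<le> 2 * (1 / real m ^ 3)})"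
    using assms(2,3) by (intro hfun_drop_le) auto
  ultimately show ?thesis
    using assms(4) by (simp add: less_Suc_eq_le)
qed

lemma grid_endpoint_bounds:
  fixes K y :: real
  assumes "2 \<le> m" "1 \<le> K" "\<bar>y\<bar> \<le> 2 * real m"
  shows "(- 2 / (1 / real m ^ 3) + 1) * K \<le> y" "y \<le> (2 * real m ^ 3 - 1) * K"
proof -
  have m: "2 \<le> real m" "4 * real m \<le> real m ^ 3"
    using assms(1) four_mult_le_cube[of "real m"] by simp_all
  have "(- 2 / (1 / real m ^ 3) + 1) * K = (1 - 2 * real m ^ 3) * K"
    by simp
  also have "\<dots> \<le> 1 - 2 * real m ^ 3"
    using mult_left_mono_neg[of 1 K "1 - 2 * real m ^ 3"] m assms(2) by simp
  finally show "(- 2 / (1 / real m ^ 3) + 1) * K \<le> y"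
    using abs_le_D2[OF assms(3)] m by linarith
  have "2 * real m ^ 3 - 1 \<le> (2 * real m ^ 3 - 1) * K"
    using mult_left_mono[of 1 K "2 * real m ^ 3 - 1"] m assms(2) by simp
  then show "y \<le> (2 * real m ^ 3 - 1) * K"
    using abs_le_D1[OF assms(3)] m by linarith
qed

lemma exists_good_grid_point:
  assumes "2 \<le> m" "17 \<le> K" "\<forall>i<m. \<bar>va i\<bar> \<le> 2 \<and> \<bar>vb i\<bar> \<le> 2"
    and "\<forall>c\<in>Cgrid m. card {i \<in> {..<m}. \<bar>vb i - c * va i\<bar> \<le> 2 / real m ^ 3} < 5"
  shows "\<exists>c\<in>Cgrid m. (- 2 / c + 1) * K \<le> hfun m va vb c \<and> hfun m va vb c \<le> (2 * c - 1) * K"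
proof -
  define \<delta> where "\<delta> = 1 / real m ^ 3"
  define h where "h j = hfun m va vb (real j * \<delta>)" for j :: nat
  define lo where "lo j = (- 2 / (real j * \<delta>) + 1) * K" for j :: nat
  define up where "up j = (2 * (real j * \<delta>) - 1) * K" for j :: nat
  have grid: "real j * \<delta> \<in> Cgrid m" if "j \<in> {1..m ^ 6}" for j
    using that by (auto simp: Cgrid_def \<delta>_def)
  have h_bound: "\<bar>h j\<bar> \<le> 2 * real m" for j
    unfolding h_def using abs_hfun_le[of "real j * \<delta>" m va 2 vb] assms(3)
    by (simp add: \<delta>_def mult.commute)
  have up_last: "up (m ^ 6) = (2 * real m ^ 3 - 1) * K"
    using power_diff[of "real m" 3 6] assms(1) by (simp add: up_def \<delta>_def)
  have "lo 1 \<le> h 1"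
    using grid_endpoint_bounds(1)[OF assms(1) _ h_bound[of 1]] assms(2) by (simp add: lo_def \<delta>_def)
  moreover have "h (m ^ 6) \<le> up (m ^ 6)"
    using grid_endpoint_bounds(2)[OF assms(1) _ h_bound[of "m ^ 6"]] up_last assms(2) by simp
  moreover have "h j - h (Suc j) \<le> up j - lo (Suc j)" if "1 \<le> j" "j < m ^ 6" for j
  proof -
    have c: "0 < real j * \<delta>" "real (Suc j) * \<delta> = real j * \<delta> + \<delta>"
      using that assms(1) by (simp_all add: \<delta>_def add_divide_distrib)
    have "card {i \<in> {..<m}. \<bar>vb i - real j * \<delta> * va i\<bar> \<le> 2 / real m ^ 3} < 5"
      using assms(4) grid[of j] that by simp
    then have "h j - h (Suc j) \<le> 17"
      using hfun_grid_step_le[OF assms(1) less_imp_le[OF c(1)] assms(3)]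
      unfolding h_def c(2) unfolding \<delta>_def by blast
    also have "\<dots> \<le> up j - lo (Suc j)"
      using band_gap_ge[OF c(1), of \<delta> K] four_mult_le_cube[of "real m"] assms(1,2)
      unfolding up_def lo_def c(2) by (simp add: \<delta>_def field_simps)
    finally show ?thesis .
  qed
  ultimately obtain j where "j \<in> {1..m ^ 6}" "lo j \<le> h j" "h j \<le> up j"
    using exists_between_bounds_of_drops_le[of 1 "m ^ 6" lo h up] assms(1) by auto
  then show ?thesis
    using grid unfolding lo_def h_def up_def by blast
qed

section \<open>Probability of the good event\<close>

lemma mem_good_event_if_concentrated:
  assumes "2 \<le> m" "17 \<le> real m / sqrt q * ln (real m)"
    and "\<forall>i<m. 0 \<le> ua i \<and> ua i \<le> 1 \<and> 0 \<le> ub i \<and> ub i \<le> 1"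
    and "\<forall>i<m. \<bar>\<omega> (True, i) - ua i\<bar> \<le> 1 \<and> \<bar>\<omega> (False, i) - ub i\<bar> \<le> 1"
    and "\<forall>c\<in>Cgrid m. card {i \<in> {..<m}. \<omega> \<in> near_line c (2 / real m ^ 3) i} < 5"
  shows "\<omega> \<in> good_event m q"
proof -
  have "\<bar>\<omega> (True, i)\<bar> \<le> 2 \<and> \<bar>\<omega> (False, i)\<bar> \<le> 2" if "i < m" for i
    using assms(3)[rule_format, OF that] assms(4)[rule_format, OF that]
    by (simp add: abs_le_iff; linarith)
  then have "\<exists>c\<in>Cgrid m. (- 2 / c + 1) * (real m / sqrt q * ln (real m))
        \<le> hfun m (\<lambda>i. \<omega> (True, i)) (\<lambda>i. \<omega> (False, i)) c
      \<and> hfun m (\<lambda>i. \<omega> (True, i)) (\<lambda>i. \<omega> (False, i)) c \<le> (2 * c - 1) * (real m / sqrt q * ln (real m))"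
    using assms(1,2,5) by (intro exists_good_grid_point) (auto simp: near_line_def)
  then show ?thesis
    unfolding good_event_def by (simp add: mult.assoc)
qed

lemma sets_good_event:
  "space (normal_product (UNIV \<times> {..<m}) \<mu> \<sigma>) \<inter> good_event m q
     \<in> sets (normal_product (UNIV \<times> {..<m}) \<mu> \<sigma>)"
proof -
  have "space (normal_product (UNIV \<times> {..<m}) \<mu> \<sigma>) \<inter> good_event m q
      = {\<omega> \<in> space (normal_product (UNIV \<times> {..<m}) \<mu> \<sigma>). \<exists>c\<in>Cgrid m.
          (- 2 / c + 1) * (real m / sqrt q) * ln (real m) \<le> hfun m (\<lambda>i. \<omega> (True, i)) (\<lambda>i. \<omega> (False, i)) c
        \<and> hfun m (\<lambda>i. \<omega> (True, i)) (\<lambda>i. \<omega> (False, i)) c \<le> (2 * c - 1) * (real m / sqrt q) * ln (real m)}"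
    unfolding good_event_def by auto
  also have "\<dots> \<in> sets (normal_product (UNIV \<times> {..<m}) \<mu> \<sigma>)"
    unfolding hfun_def ea'_def eb'_def xsgn_def
    by (intro sets.sets_Collect_finite_Ex finite_Cgrid) measurable
  finally show ?thesis .
qed

lemma (in prob_space) prob_ge_one_minus_two:
  assumes "B1 \<in> events" "B2 \<in> events" "G \<in> events" "space M - (B1 \<union> B2) \<subseteq> G"
  shows "1 - prob B1 - prob B2 \<le> prob G"
proof -
  have "1 - prob B1 - prob B2 \<le> prob (space M - (B1 \<union> B2))"
    using measure_Un_le[OF assms(1,2)] prob_compl[of "B1 \<union> B2"] assms(1,2) by simp
  also have "\<dots> \<le> prob G"
    using assms by (intro finite_measure_mono) auto
  finally show ?thesis .
qed

lemma measure_good_event_ge: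
  assumes "2 \<le> m" "0 < \<sigma>" "\<forall>i<m. 0 \<le> ua i \<and> ua i \<le> 1 \<and> 0 \<le> ub i \<and> ub i \<le> 1"
    and "17 \<le> real m / sqrt q * ln (real m)"
  defines "M \<equiv> obs_space m ua ub \<sigma>"
  shows "1 - 4 * real m * exp (- 1 / (2 * \<sigma>\<^sup>2))
           - card (Cgrid m) * (m choose 5) * (4 / (real m ^ 3 * \<sigma>)) ^ 5
         \<le> measure M (space M \<inter> good_event m q)"
proof -
  define \<mu> where "\<mu> = (\<lambda>(\<nu>, i). if \<nu> then ua i else ub i)"
  have M: "M = normal_product (UNIV \<times> {..<m}) \<mu> \<sigma>"
    unfolding M_def \<mu>_def by (rule obs_space_eq_normal_product)
  interpret prob_space M
    unfolding M using assms(2) by (rule prob_space_normal_product)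
  define r where "r = 2 / real m ^ 3"
  define B1 where "B1 = {\<omega> \<in> space M. \<exists>p\<in>UNIV \<times> {..<m}. 1 < \<bar>\<omega> p - \<mu> p\<bar>}"
  define B2 where "B2 = {\<omega> \<in> space M. \<exists>c\<in>Cgrid m. 5 \<le> card {i \<in> {..<m}. \<omega> \<in> near_line c r i}}"
  have B1: "B1 \<in> sets M" "measure M B1 \<le> 4 * real m * exp (- 1 / (2 * \<sigma>\<^sup>2))"
    using normal_product_deviation_le[OF assms(2) zero_le_one, where I = "UNIV \<times> {..<m}" and \<mu> = \<mu>]
    unfolding B1_def M by (simp_all add: card_cartesian_product)
  have "2 * r / \<sigma> = 4 / (real m ^ 3 * \<sigma>)"
    by (simp add: r_def)
  then have B2: "B2 \<in> sets M"
      "measure M B2 \<le> card (Cgrid m) * (m choose 5) * (4 / (real m ^ 3 * \<sigma>)) ^ 5"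
    using normal_product_near_line_count_le[OF assms(2) _ finite_lessThan finite_Cgrid,
        where r = r and \<mu> = \<mu> and k = 5]
    unfolding B2_def M by (simp_all add: r_def)
  have G: "space M \<inter> good_event m q \<in> sets M"
    unfolding M by (rule sets_good_event)
  have "space M - (B1 \<union> B2) \<subseteq> space M \<inter> good_event m q"
  proof
    fix \<omega> assume \<omega>: "\<omega> \<in> space M - (B1 \<union> B2)"
    then have dev: "\<bar>\<omega> p - \<mu> p\<bar> \<le> 1" if "p \<in> UNIV \<times> {..<m}" for p
      using that unfolding B1_def by (auto simp: not_less)
    have "\<forall>i<m. \<bar>\<omega> (True, i) - ua i\<bar> \<le> 1 \<and> \<bar>\<omega> (False, i) - ub i\<bar> \<le> 1"
      using dev[of "(True, _)"] dev[of "(False, _)"] by (simp add: \<mu>_def)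
    moreover have "\<forall>c\<in>Cgrid m. card {i \<in> {..<m}. \<omega> \<in> near_line c (2 / real m ^ 3) i} < 5"
      using \<omega> unfolding B2_def r_def by (auto simp: not_le)
    ultimately have "\<omega> \<in> good_event m q"
      by (rule mem_good_event_if_concentrated[OF assms(1,4,3)])
    then show "\<omega> \<in> space M \<inter> good_event m q"
      using \<omega> by blast
  qed
  then have "1 - measure M B1 - measure M B2 \<le> measure M (space M \<inter> good_event m q)"
    by (rule prob_ge_one_minus_two[OF B1(1) B2(1) G])
  then show ?thesis
    using B1(2) B2(2) by linarith
qed

lemma query_term_le:
  fixes D L :: real
  assumes "0 < real m" "0 < L" "real m powr (1/4) * L\<^sup>2 \<le> D"
  shows "15 * real m powr (3/2) / D\<^sup>2 * L \<le> 15 * real m / L ^ 3"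
proof -
  have "(real m powr (1/4)) ^ 2 = sqrt (real m)"
    using assms(1) by (simp add: powr_power powr_half_sqrt)
  then have "(real m powr (1/4) * L\<^sup>2)\<^sup>2 = sqrt (real m) * L ^ 4"
    by (simp add: power_mult_distrib flip: power_mult)
  moreover have "(real m powr (1/4) * L\<^sup>2)\<^sup>2 \<le> D\<^sup>2"
    using assms(3) by (intro power_mono) auto
  ultimately have D: "sqrt (real m) * L ^ 4 \<le> D\<^sup>2"
    by simp
  moreover have "0 < sqrt (real m) * L ^ 4"
    using assms(1,2) by simp
  ultimately have "0 < D\<^sup>2 * (sqrt (real m) * L ^ 4)"
    by (meson less_le_trans mult_pos_pos)
  with D have "15 * real m * sqrt (real m) * L / D\<^sup>2
      \<le> 15 * real m * sqrt (real m) * L / (sqrt (real m) * L ^ 4)"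
    using assms(1,2) by (intro divide_left_mono) auto
  moreover have "real m powr (3/2) = real m * sqrt (real m)"
    using powr_add[of "real m" 1 "1/2"] assms(1) by (simp add: powr_half_sqrt)
  moreover have "15 * real m * sqrt (real m) * L / (sqrt (real m) * L ^ 4) = 15 * real m / L ^ 3"
    using assms(1,2) by (simp add: field_simps eval_nat_numeral)
  ultimately show ?thesis
    by simp
qed

lemma nq_bounds:
  fixes D :: real
  assumes "1 \<le> ln (real m)" "real m powr (1/4) * ln (real m) ^ 2 \<le> D"
    and "15 * real m / ln (real m) ^ 3 + ln (real m) ^ 2 + 1 \<le> 16 * real m"
  shows "real m * ln (real m) ^ 2 \<le> real (nq m D)" "real (nq m D) \<le> 16 * real m ^ 2"
proof -
  define L where "L = ln (real m)"
  define X where "X = 15 * real m powr (3/2) / D\<^sup>2 * L + L\<^sup>2"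
  have "0 < real m"
    using assms(1) by (cases "m = 0") auto
  have "0 < L"
    using assms(1) by (simp add: L_def)
  have "0 \<le> 15 * real m powr (3/2) / D\<^sup>2 * L"
    using \<open>0 < L\<close> by (intro mult_nonneg_nonneg divide_nonneg_nonneg) auto
  then have "L\<^sup>2 \<le> X"
    by (simp add: X_def)
  then have nq: "real (nq m D) = real m * of_int \<lceil>X\<rceil>"
    using zero_le_power2[of L] by (simp add: nq_def X_def L_def)
  show "real m * ln (real m) ^ 2 \<le> real (nq m D)"
    unfolding nq L_def[symmetric]
    using \<open>L\<^sup>2 \<le> X\<close> by (intro mult_left_mono order_trans[OF _ le_of_int_ceiling]) auto
  have "15 * real m powr (3/2) / D\<^sup>2 * L \<le> 15 * real m / L ^ 3"
    by (rule query_term_le[OF \<open>0 < real m\<close> \<open>0 < L\<close>]) (use assms(2) in \<open>simp add: L_def\<close>)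
  then have "of_int \<lceil>X\<rceil> \<le> 16 * real m"
    using assms(3) of_int_ceiling_le_add_one[of X] unfolding X_def L_def by linarith
  then show "real (nq m D) \<le> 16 * real m ^ 2"
    unfolding nq using \<open>0 < real m\<close> by (simp add: power2_eq_square)
qed

lemma coincidence_error_le:
  assumes "5 \<le> m" "0 < q" "q \<le> 16 * real m ^ 2"
  shows "card (Cgrid m) * (m choose 5) * (4 / (real m ^ 3 * sqrt (real m / q))) ^ 5
       \<le> real m ^ 11 * (16 * sqrt (real m) / real m ^ 3) ^ 5"
proof -
  have "0 < real m"
    using assms(1) by simp
  have "q / real m \<le> 16 * real m"
    using assms(3) \<open>0 < real m\<close> by (simp add: field_simps power2_eq_square)
  then have "sqrt (q / real m) \<le> 4 * sqrt (real m)"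
    using real_sqrt_le_mono by (fastforce simp: real_sqrt_mult)
  moreover have "4 / (real m ^ 3 * sqrt (real m / q)) = 4 * sqrt (q / real m) / real m ^ 3"
    using \<open>0 < real m\<close> assms(2) by (simp add: real_sqrt_divide field_simps)
  ultimately have "4 / (real m ^ 3 * sqrt (real m / q)) \<le> 16 * sqrt (real m) / real m ^ 3"
    by (simp add: divide_right_mono)
  then have "(4 / (real m ^ 3 * sqrt (real m / q))) ^ 5 \<le> (16 * sqrt (real m) / real m ^ 3) ^ 5"
    using \<open>0 < real m\<close> assms(2) by (intro power_mono) auto
  moreover have "card (Cgrid m) * (m choose 5) \<le> m ^ 11"
    using mult_le_mono[OF card_Cgrid_le[of m] binomial_le_pow[OF assms(1)]] by (simp flip: power_add)
  then have "real (card (Cgrid m) * (m choose 5)) \<le> real m ^ 11"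
    by (metis of_nat_le_iff of_nat_power)
  ultimately show ?thesis
    using \<open>0 < real m\<close> assms(2) by (intro mult_mono) auto
qed

lemma scale_ge:
  assumes "68 \<le> ln (real m)" "0 < q" "q \<le> 16 * real m ^ 2"
  shows "17 \<le> real m / sqrt q * ln (real m)"
proof -
  have "sqrt q \<le> 4 * real m"
    using real_sqrt_le_mono[OF assms(3)] by (simp add: real_sqrt_mult)
  then have "ln (real m) / 4 \<le> real m / sqrt q * ln (real m)"
    using assms(1,2) by (simp add: field_simps mult_right_mono)
  then show ?thesis
    using assms(1) by linarith
qed

lemma measure_good_event_error_le:
  fixes D :: real
  assumes "5 \<le> m" "68 \<le> ln (real m)" "real m powr (1/4) * ln (real m) ^ 2 \<le> D"
    and "15 * real m / ln (real m) ^ 3 + ln (real m) ^ 2 + 1 \<le> 16 * real m"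
    and "\<forall>i<m. 0 \<le> ua i \<and> ua i \<le> 1 \<and> 0 \<le> ub i \<and> ub i \<le> 1"
  defines "q \<equiv> real (nq m D)"
  defines "M \<equiv> obs_space m ua ub (sqrt (real m / q))"
  shows "\<bar>measure M (space M \<inter> good_event m q) - 1\<bar>
         \<le> 4 * real m * exp (- (ln (real m))\<^sup>2 / 2) + real m ^ 11 * (16 * sqrt (real m) / real m ^ 3) ^ 5"
proof -
  define L where "L = ln (real m)"
  define \<sigma> where "\<sigma> = sqrt (real m / q)"
  have q: "real m * L\<^sup>2 \<le> q" "q \<le> 16 * real m ^ 2"
    using nq_bounds[of m D] assms(2-4) unfolding q_def L_def by auto
  have "0 < real m" "68 \<le> L"
    using assms(1,2) by (simp_all add: L_def)
  then have "0 < q"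
    using q(1) by (smt (verit) mult_pos_pos zero_less_power)
  then have \<sigma>: "0 < \<sigma>" "\<sigma>\<^sup>2 = real m / q"
    using \<open>0 < real m\<close> by (simp_all add: \<sigma>_def)
  interpret prob_space M
    unfolding M_def obs_space_eq_normal_product using \<sigma>(1) unfolding \<sigma>_def
    by (rule prob_space_normal_product)
  have "17 \<le> real m / sqrt q * ln (real m)"
    using scale_ge[OF assms(2) \<open>0 < q\<close> q(2)] .
  then have "1 - 4 * real m * exp (- 1 / (2 * \<sigma>\<^sup>2))
      - card (Cgrid m) * (m choose 5) * (4 / (real m ^ 3 * \<sigma>)) ^ 5
      \<le> measure M (space M \<inter> good_event m q)"
    using measure_good_event_ge[OF _ \<sigma>(1) assms(5)] assms(1) unfolding M_def \<sigma>_def by auto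
  moreover have "exp (- 1 / (2 * \<sigma>\<^sup>2)) \<le> exp (- L\<^sup>2 / 2)"
    using q(1) \<open>0 < real m\<close> by (simp add: \<sigma>(2) field_simps)
  then have "4 * real m * exp (- 1 / (2 * \<sigma>\<^sup>2)) \<le> 4 * real m * exp (- (ln (real m))\<^sup>2 / 2)"
    using \<open>0 < real m\<close> by (simp add: L_def)
  moreover have "card (Cgrid m) * (m choose 5) * (4 / (real m ^ 3 * \<sigma>)) ^ 5
      \<le> real m ^ 11 * (16 * sqrt (real m) / real m ^ 3) ^ 5"
    unfolding \<sigma>_def using assms(1) \<open>0 < q\<close> q(2) by (rule coincidence_error_le)
  ultimately show ?thesis
    using prob_le_1[of "space M \<inter> good_event m q"] by (simp add: abs_le_iff)
qed

theorem lemma9: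
  fixes \<Delta> :: "nat \<Rightarrow> real"
    and ua ub :: "nat \<Rightarrow> nat \<Rightarrow> real"
  assumes "eventually (\<lambda>m. \<Delta> m \<ge> real m powr (1/4) * (ln (real m))\<^sup>2) sequentially"
    and "\<Delta> \<in> o(\<lambda>m. real m / ln (real m))"
    and "eventually (\<lambda>m. \<forall>i<m. 0 \<le> ua m i \<and> ua m i \<le> 1 \<and> 0 \<le> ub m i \<and> ub m i \<le> 1) sequentially"
    and "eventually (\<lambda>m. \<exists>A\<subseteq>{..<m}. envy m (ua m) (ub m) A \<le> - \<Delta> m) sequentially"
  shows "(\<lambda>m. measure (obs_space m (ua m) (ub m) (sqrt (real m / real (nq m (\<Delta> m)))))
                  (space (obs_space m (ua m) (ub m) (sqrt (real m / real (nq m (\<Delta> m)))))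
                   \<inter> good_event m (real (nq m (\<Delta> m)))))
         \<longlonglongrightarrow> 1"
proof -
  define P where "P m = measure (obs_space m (ua m) (ub m) (sqrt (real m / real (nq m (\<Delta> m)))))
                  (space (obs_space m (ua m) (ub m) (sqrt (real m / real (nq m (\<Delta> m)))))
                   \<inter> good_event m (real (nq m (\<Delta> m))))" for m
  define err where "err m = 4 * real m * exp (- (ln (real m))\<^sup>2 / 2)
    + real m ^ 11 * (16 * sqrt (real m) / real m ^ 3) ^ 5" for m :: nat
  have "err \<longlonglongrightarrow> 0"
    unfolding err_def by real_asymp
  moreover have "eventually (\<lambda>m. norm (P m - 1) \<le> err m) sequentially"
  proof -
    have "eventually (\<lambda>m::nat. 68 \<le> ln (real m)) sequentially"
      and "eventually (\<lambda>m::nat. 15 * real m / ln (real m) ^ 3 + ln (real m) ^ 2 + 1 \<le> 16 * real m)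
        sequentially"
      by real_asymp+
    then show ?thesis
      using assms(1,3) eventually_ge_at_top[of 5]
      unfolding P_def err_def real_norm_def
      by eventually_elim (rule measure_good_event_error_le; assumption)
  qed
  ultimately have "(\<lambda>m. P m - 1) \<longlonglongrightarrow> 0"
    by (rule Lim_null_comparison[rotated])
  then show ?thesis
    unfolding P_def by (simp add: LIM_zero_iff)
qed

end
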